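(* Let $K_{n,m}$ be a nice complete bipartite graph with $K_{n,m}\ne K_{2,2}$. Then $\chi'_{qm\Sigma}(K_{n,m})=2$ if $n\ne m$, and $\chi'_{qm\Sigma}(K_{n,m})=3$ if $n=m$.
   Context: A $k$-edge-coloring of $G$ is any map $c:E(G)\to\{1,\dots,k\}$ (adjacent edges may share colors). It induces $\sigma_c(v)=\sum_{u\in N(v)}c(vu)$. The coloring is neighbor sum distinguishing (NSD) if $\sigma_c(u)\ne\sigma_c(v)$ for every edge $uv$. It is quasi-majority if every vertex $v$ is incident to at most $\lceil d(v)/2\rceil$ edges of each single color. $\chi'_{qm\Sigma}(G)$ denotes the least $k$ such that $G$ has a $k$-edge-coloring that is both quasi-majority and NSD. A graph is nice if it has no connected component isomorphic to $K_2$. *)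

theory Defs
  imports Main
begin

text \<open>A simple graph is represented by its edge set E, a set of 2-element vertex sets.\<close>

definition incident :: "'a set set \<Rightarrow> 'a \<Rightarrow> 'a set set" where
  "incident E v = {e \<in> E. v \<in> e}"

definition degree :: "'a set set \<Rightarrow> 'a \<Rightarrow> nat" where
  "degree E v = card (incident E v)"

definition sigma :: "'a set set \<Rightarrow> ('a set \<Rightarrow> nat) \<Rightarrow> 'a \<Rightarrow> nat" where
  "sigma E c v = (\<Sum>e\<in>incident E v. c e)"

definition k_edge_coloring :: "'a set set \<Rightarrow> nat \<Rightarrow> ('a set \<Rightarrow> nat) \<Rightarrow> bool" where
  "k_edge_coloring E k c \<longleftrightarrow> (\<forall>e\<in>E. c e \<in> {1..k})"

text \<open>quasi-majority: at most ceil(d(v)/2) = (d(v)+1) div 2 incident edges of each colour.\<close>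
definition quasi_majority :: "'a set set \<Rightarrow> ('a set \<Rightarrow> nat) \<Rightarrow> bool" where
  "quasi_majority E c \<longleftrightarrow>
     (\<forall>v i. card {e \<in> incident E v. c e = i} \<le> (degree E v + 1) div 2)"

definition nsd :: "'a set set \<Rightarrow> ('a set \<Rightarrow> nat) \<Rightarrow> bool" where
  "nsd E c \<longleftrightarrow> (\<forall>u v. {u, v} \<in> E \<and> u \<noteq> v \<longrightarrow> sigma E c u \<noteq> sigma E c v)"

definition chi_qm_sigma :: "'a set set \<Rightarrow> nat" where
  "chi_qm_sigma E = (LEAST k. \<exists>c. k_edge_coloring E k c \<and> quasi_majority E c \<and> nsd E c)"

definition complete_bipartite :: "nat \<Rightarrow> nat \<Rightarrow> (nat + nat) set set" where
  "complete_bipartite n m = {{Inl i, Inr j} | i j. i < n \<and> j < m}"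

end

(* With two colours, quasi-majority forces a vertex of degree d to have floor(d/2) or ceil(d/2)
   edges of colour 2, so its colour sum s satisfies |2s - 3d| <= 1.  For n <> m this separates the
   sums of the two sides, so every quasi-majority 2-colouring (e.g. a 2x2 block pattern) is NSD,
   while one colour violates quasi-majority at any vertex of degree at least 2.  For n = m all sums
   lie in {floor(3m/2), ceil(3m/2)}, so an NSD 2-colouring would be constant on each side with two
   different values; but both sides add up to the total weight of the colouring.  For m >= 3 an
   explicit 3-colouring of K_{m,m} works. *)

theory Submission
  imports Defs
begin

lemma sum_blocks:
  fixes x y z :: "'a :: comm_semiring_1"
  assumes "p \<le> q" "q \<le> m"
    and "\<And>i. i < p \<Longrightarrow> f i = x"
    and "\<And>i. p \<le> i \<Longrightarrow> i < q \<Longrightarrow> f i = y"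
    and "\<And>i. q \<le> i \<Longrightarrow> i < m \<Longrightarrow> f i = z"
  shows "(\<Sum>i<m. f i) = of_nat p * x + of_nat (q - p) * y + of_nat (m - q) * z"
proof -
  have "sum f {0..<m} = sum f {0..<q} + sum f {q..<m}"
    by (rule sum.atLeastLessThan_concat[symmetric]) (use assms in auto)
  also have "sum f {0..<q} = sum f {0..<p} + sum f {p..<q}"
    by (rule sum.atLeastLessThan_concat[symmetric]) (use assms in auto)
  finally have "(\<Sum>i<m. f i) = sum f {0..<p} + sum f {p..<q} + sum f {q..<m}"
    by (simp only: atLeast0LessThan)
  also have "\<dots> = sum (\<lambda>_. x) {0..<p} + sum (\<lambda>_. y) {p..<q} + sum (\<lambda>_. z) {q..<m}"
    using assms(3-5) by (intro arg_cong2[where f = "(+)"] sum.cong) auto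
  finally show ?thesis
    by (simp only: sum_constant card_atLeastLessThan diff_zero)
qed

lemma card_level_set_blocks:
  assumes "p \<le> q" "q \<le> m"
    and "\<And>i. i < p \<Longrightarrow> f i = x"
    and "\<And>i. p \<le> i \<Longrightarrow> i < q \<Longrightarrow> f i = y"
    and "\<And>i. q \<le> i \<Longrightarrow> i < m \<Longrightarrow> f i = z"
  shows "card {i \<in> {..<m}. f i = v}
    = p * of_bool (x = v) + (q - p) * of_bool (y = v) + (m - q) * of_bool (z = v)"
proof -
  have "card {i \<in> {..<m}. f i = v} = (\<Sum>i<m. of_bool (f i = v))"
    by (simp add: Int_def)
  also have "\<dots> = of_nat p * of_bool (x = v) + of_nat (q - p) * of_bool (y = v)
      + of_nat (m - q) * of_bool (z = v)"
    by (rule sum_blocks) (use assms in auto)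
  finally show ?thesis by simp
qed

lemma sum_halves:
  assumes "p \<le> m"
  shows "(\<Sum>i<m. if i < p then x else y) = p * x + (m - p) * (y :: nat)"
  by (subst sum_blocks[where p = p and q = m and x = x and y = y and z = y]) (use assms in auto)

lemma sum_three_blocks:
  assumes "p < m"
  shows "(\<Sum>i<m. if i < p then x else if i < m - 1 then y else z)
    = p * x + (m - 1 - p) * y + (z :: nat)"
  by (subst sum_blocks[where p = p and q = "m - 1" and x = x and y = y and z = z]) (use assms in auto)

definition quasi_majority_seq :: "nat \<Rightarrow> (nat \<Rightarrow> 'a) \<Rightarrow> bool" where
  "quasi_majority_seq m f \<longleftrightarrow> (\<forall>v. card {i \<in> {..<m}. f i = v} \<le> (m + 1) div 2)"

lemma quasi_majority_seq_halves:
  assumes "x \<noteq> y"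
  shows "quasi_majority_seq m (\<lambda>i. if i < m div 2 then x else y)"
  unfolding quasi_majority_seq_def
proof
  fix v
  have "card {i \<in> {..<m}. (if i < m div 2 then x else y) = v}
    = m div 2 * of_bool (x = v) + (m - m div 2) * of_bool (y = v) + 0"
    by (subst card_level_set_blocks[where p = "m div 2" and q = m and x = x and y = y and z = y])
      auto
  then show "card {i \<in> {..<m}. (if i < m div 2 then x else y) = v} \<le> (m + 1) div 2"
    using assms by auto
qed

lemma quasi_majority_seq_three_blocks:
  assumes "x \<noteq> y" "y \<noteq> z" "x \<noteq> z"
  shows "quasi_majority_seq m (\<lambda>i. if i < m div 2 then x else if i < m - 1 then y else z)"
  unfolding quasi_majority_seq_def
proof
  fix v
  show "card {i \<in> {..<m}. (if i < m div 2 then x else if i < m - 1 then y else z) = v}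
    \<le> (m + 1) div 2"
  proof (cases "m = 0")
    case False
    then show ?thesis
      using card_level_set_blocks[where p = "m div 2" and q = "m - 1" and m = m and v = v
          and f = "\<lambda>i. if i < m div 2 then x else if i < m - 1 then y else z"] assms
      by auto
  qed simp
qed

lemma k_edge_coloring_mono: "k_edge_coloring E k c \<Longrightarrow> k \<le> l \<Longrightarrow> k_edge_coloring E l c"
  unfolding k_edge_coloring_def by auto

lemma degree_le_one_if_one_color:
  assumes "k_edge_coloring E 1 c" "quasi_majority E c"
  shows "degree E v \<le> 1"
proof -
  have "{e \<in> incident E v. c e = 1} = incident E v"
    using assms(1) by (auto simp: k_edge_coloring_def incident_def)
  then have "degree E v \<le> (degree E v + 1) div 2"
    using assms(2) unfolding quasi_majority_def degree_def by metis
  then show ?thesis by linarith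
qed

lemma sigma_two_colors:
  assumes "k_edge_coloring E 2 c" "quasi_majority E c"
  shows "\<bar>2 * int (sigma E c v) - 3 * int (degree E v)\<bar> \<le> 1"
proof (cases "finite (incident E v)")
  case True
  define ones where "ones = {e \<in> incident E v. c e = 1}"
  define twos where "twos = {e \<in> incident E v. c e = 2}"
  have split: "incident E v = ones \<union> twos" "ones \<inter> twos = {}"
    using assms(1) by (auto simp: ones_def twos_def k_edge_coloring_def incident_def)
  have "finite ones" "finite twos"
    using True split(1) by auto
  then have degree: "degree E v = card ones + card twos"
    using split by (simp add: degree_def card_Un_disjoint)
  have sigma: "sigma E c v = card ones + 2 * card twos"
  proof -
    have "sigma E c v = sum c ones + sum c twos"
      using split \<open>finite ones\<close> \<open>finite twos\<close> by (simp add: sigma_def sum.union_disjoint)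
    also have "sum c ones = sum (\<lambda>_. 1) ones"
      by (rule sum.cong) (auto simp: ones_def)
    also have "sum c twos = sum (\<lambda>_. 2) twos"
      by (rule sum.cong) (auto simp: twos_def)
    finally show ?thesis by simp
  qed
  have "card ones \<le> (degree E v + 1) div 2" "card twos \<le> (degree E v + 1) div 2"
    using assms(2) by (simp_all add: quasi_majority_def ones_def twos_def)
  then show ?thesis
    using degree sigma unfolding abs_le_iff by linarith
qed (simp add: sigma_def degree_def)

lemma chi_qm_sigma_eqI:
  assumes "k_edge_coloring E k c" "quasi_majority E c" "nsd E c"
    and "\<And>c. k_edge_coloring E (k - 1) c \<Longrightarrow> quasi_majority E c \<Longrightarrow> \<not> nsd E c"
  shows "chi_qm_sigma E = k"
  unfolding chi_qm_sigma_def
proof (rule Least_equality)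
  show "\<exists>c. k_edge_coloring E k c \<and> quasi_majority E c \<and> nsd E c"
    using assms(1-3) by blast
next
  fix l
  assume "\<exists>c. k_edge_coloring E l c \<and> quasi_majority E c \<and> nsd E c"
  then obtain c' where c': "k_edge_coloring E l c'" "quasi_majority E c'" "nsd E c'"
    by blast
  show "k \<le> l"
  proof (rule ccontr)
    assume "\<not> k \<le> l"
    then have "k_edge_coloring E (k - 1) c'"
      using k_edge_coloring_mono[OF c'(1)] by simp
    then show False
      using assms(4) c'(2,3) by blast
  qed
qed

lemma incident_complete_bipartite_Inl:
  "i < n \<Longrightarrow> incident (complete_bipartite n m) (Inl i) = (\<lambda>j. {Inl i, Inr j}) ` {..<m}"
  unfolding incident_def complete_bipartite_def by auto

lemma incident_complete_bipartite_Inr: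
  "j < m \<Longrightarrow> incident (complete_bipartite n m) (Inr j) = (\<lambda>i. {Inl i, Inr j}) ` {..<n}"
  unfolding incident_def complete_bipartite_def by auto

lemma degree_complete_bipartite_Inl: "i < n \<Longrightarrow> degree (complete_bipartite n m) (Inl i) = m"
  by (simp add: degree_def incident_complete_bipartite_Inl card_image inj_on_def doubleton_eq_iff)

lemma degree_complete_bipartite_Inr: "j < m \<Longrightarrow> degree (complete_bipartite n m) (Inr j) = n"
  by (simp add: degree_def incident_complete_bipartite_Inr card_image inj_on_def doubleton_eq_iff)

lemma sigma_complete_bipartite_Inl:
  "i < n \<Longrightarrow> sigma (complete_bipartite n m) c (Inl i) = (\<Sum>j<m. c {Inl i, Inr j})"
  by (simp add: sigma_def incident_complete_bipartite_Inl sum.reindex inj_on_def doubleton_eq_iff)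

lemma sigma_complete_bipartite_Inr:
  "j < m \<Longrightarrow> sigma (complete_bipartite n m) c (Inr j) = (\<Sum>i<n. c {Inl i, Inr j})"
  by (simp add: sigma_def incident_complete_bipartite_Inr sum.reindex inj_on_def doubleton_eq_iff)

lemma sum_sigma_complete_bipartite:
  "(\<Sum>i<n. sigma (complete_bipartite n m) c (Inl i)) = (\<Sum>j<m. sigma (complete_bipartite n m) c (Inr j))"
  by (simp add: sigma_complete_bipartite_Inl sigma_complete_bipartite_Inr sum.swap[of _ "{..<n}"])

lemma nsd_complete_bipartite_iff:
  "nsd (complete_bipartite n m) c \<longleftrightarrow>
    (\<forall>i<n. \<forall>j<m. sigma (complete_bipartite n m) c (Inl i)
      \<noteq> sigma (complete_bipartite n m) c (Inr j))"
  (is "_ \<longleftrightarrow> ?separated")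
proof
  assume "nsd (complete_bipartite n m) c"
  then show ?separated
    unfolding nsd_def complete_bipartite_def by blast
next
  assume separated: ?separated
  show "nsd (complete_bipartite n m) c"
    unfolding nsd_def
  proof (intro allI impI)
    fix u v
    assume "{u, v} \<in> complete_bipartite n m \<and> u \<noteq> v"
    then obtain i j where "i < n" "j < m" "{u, v} = {Inl i, Inr j}"
      unfolding complete_bipartite_def by auto
    then have "u = Inl i \<and> v = Inr j \<or> u = Inr j \<and> v = Inl i"
      by (auto simp: doubleton_eq_iff)
    then show "sigma (complete_bipartite n m) c u \<noteq> sigma (complete_bipartite n m) c v"
      using separated \<open>i < n\<close> \<open>j < m\<close> by (metis (no_types, lifting))
  qed
qed

lemma quasi_majority_complete_bipartiteI:
  assumes rows: "\<And>i. i < n \<Longrightarrow> quasi_majority_seq m (\<lambda>j. c {Inl i, Inr j})"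
    and columns: "\<And>j. j < m \<Longrightarrow> quasi_majority_seq n (\<lambda>i. c {Inl i, Inr j})"
  shows "quasi_majority (complete_bipartite n m) c"
  unfolding quasi_majority_def
proof (intro allI)
  fix v x
  show "card {e \<in> incident (complete_bipartite n m) v. c e = x}
    \<le> (degree (complete_bipartite n m) v + 1) div 2"
  proof (cases "\<exists>i<n. v = Inl i")
    case True
    then obtain i where i: "i < n" "v = Inl i" by blast
    have "{e \<in> incident (complete_bipartite n m) v. c e = x}
      = (\<lambda>j. {Inl i, Inr j}) ` {j \<in> {..<m}. c {Inl i, Inr j} = x}"
      using i by (auto simp: incident_complete_bipartite_Inl)
    then show ?thesis
      using rows[OF i(1)] i
      by (simp add: quasi_majority_seq_def degree_complete_bipartite_Inl card_image inj_on_def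
          doubleton_eq_iff)
  next
    case not_left: False
    show ?thesis
    proof (cases "\<exists>j<m. v = Inr j")
      case True
      then obtain j where j: "j < m" "v = Inr j" by blast
      have "{e \<in> incident (complete_bipartite n m) v. c e = x}
        = (\<lambda>i. {Inl i, Inr j}) ` {i \<in> {..<n}. c {Inl i, Inr j} = x}"
        using j by (auto simp: incident_complete_bipartite_Inr)
      then show ?thesis
        using columns[OF j(1)] j
        by (simp add: quasi_majority_seq_def degree_complete_bipartite_Inr card_image inj_on_def
            doubleton_eq_iff)
    next
      case False
      with not_left have "incident (complete_bipartite n m) v = {}"
        by (auto simp: incident_def complete_bipartite_def)
      then show ?thesis by simp
    qed
  qed
qed

definition matrix_coloring :: "(nat \<Rightarrow> nat \<Rightarrow> nat) \<Rightarrow> (nat + nat) set \<Rightarrow> nat" where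
  "matrix_coloring F e = F (THE i. Inl i \<in> e) (THE j. Inr j \<in> e)"

lemma matrix_coloring_edge [simp]: "matrix_coloring F {Inl i, Inr j} = F i j"
  by (simp add: matrix_coloring_def)

lemma k_edge_coloring_matrix_coloring:
  assumes "\<And>i j. F i j \<in> {1..k}"
  shows "k_edge_coloring (complete_bipartite n m) k (matrix_coloring F)"
  unfolding k_edge_coloring_def complete_bipartite_def using assms by auto

lemma not_quasi_majority_one_color:
  assumes "n \<ge> 1" "m \<ge> 1" "\<not> (n = 1 \<and> m = 1)"
    and "k_edge_coloring (complete_bipartite n m) 1 c"
  shows "\<not> quasi_majority (complete_bipartite n m) c"
proof
  assume "quasi_majority (complete_bipartite n m) c"
  then have "degree (complete_bipartite n m) v \<le> 1" for v
    by (rule degree_le_one_if_one_color[OF assms(4)])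
  from this[of "Inl 0"] this[of "Inr 0"] show False
    using assms(1-3) by (simp add: degree_complete_bipartite_Inl degree_complete_bipartite_Inr)
qed

lemma nsd_two_colors_complete_bipartite:
  assumes "n \<noteq> m"
    and "k_edge_coloring (complete_bipartite n m) 2 c" "quasi_majority (complete_bipartite n m) c"
  shows "nsd (complete_bipartite n m) c"
  unfolding nsd_complete_bipartite_iff
proof (intro allI impI)
  fix i j
  assume "i < n" "j < m"
  then have "\<bar>2 * int (sigma (complete_bipartite n m) c (Inl i)) - 3 * int m\<bar> \<le> 1"
    and "\<bar>2 * int (sigma (complete_bipartite n m) c (Inr j)) - 3 * int n\<bar> \<le> 1"
    using sigma_two_colors[OF assms(2,3)]
    by (metis degree_complete_bipartite_Inl degree_complete_bipartite_Inr)+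
  then show "sigma (complete_bipartite n m) c (Inl i) \<noteq> sigma (complete_bipartite n m) c (Inr j)"
    using assms(1) by linarith
qed

lemma three_halves_two_valued:
  fixes x y z m :: nat
  assumes "\<bar>2 * int x - 3 * int m\<bar> \<le> 1" "\<bar>2 * int y - 3 * int m\<bar> \<le> 1"
    and "\<bar>2 * int z - 3 * int m\<bar> \<le> 1"
    and "x \<noteq> z" "y \<noteq> z"
  shows "x = y"
  using assms by linarith

lemma not_nsd_two_colors_complete_bipartite_square:
  assumes "m \<ge> 1"
    and "k_edge_coloring (complete_bipartite m m) 2 c" "quasi_majority (complete_bipartite m m) c"
  shows "\<not> nsd (complete_bipartite m m) c"
proof
  assume "nsd (complete_bipartite m m) c"
  define R where "R i = sigma (complete_bipartite m m) c (Inl i)" for i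
  define C where "C j = sigma (complete_bipartite m m) c (Inr j)" for j
  have distinct: "R i \<noteq> C j" if "i < m" "j < m" for i j
    using \<open>nsd (complete_bipartite m m) c\<close> that
    by (simp add: nsd_complete_bipartite_iff R_def C_def)
  have R: "\<bar>2 * int (R i) - 3 * int m\<bar> \<le> 1" if "i < m" for i
    using sigma_two_colors[OF assms(2,3)] that by (metis R_def degree_complete_bipartite_Inl)
  have C: "\<bar>2 * int (C j) - 3 * int m\<bar> \<le> 1" if "j < m" for j
    using sigma_two_colors[OF assms(2,3)] that by (metis C_def degree_complete_bipartite_Inr)
  have "0 < m" using assms(1) by simp
  have R_const: "R i = R 0" if "i < m" for i
    using three_halves_two_valued[OF R[OF that] R[OF \<open>0 < m\<close>] C[OF \<open>0 < m\<close>]]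
      distinct that \<open>0 < m\<close> by blast
  have C_const: "C j = C 0" if "j < m" for j
    using three_halves_two_valued[OF C[OF that] C[OF \<open>0 < m\<close>] R[OF \<open>0 < m\<close>]]
      distinct that \<open>0 < m\<close> by metis
  have "m * R 0 = m * C 0"
  proof -
    have "m * R 0 = (\<Sum>i<m. R 0)" by simp
    also have "\<dots> = (\<Sum>i<m. R i)"
      by (intro sum.cong refl R_const[symmetric]) simp
    also have "\<dots> = (\<Sum>j<m. C j)"
      unfolding R_def C_def by (rule sum_sigma_complete_bipartite)
    also have "\<dots> = (\<Sum>j<m. C 0)"
      by (intro sum.cong refl C_const) simp
    also have "\<dots> = m * C 0" by simp
    finally show ?thesis .
  qed
  then show False
    using distinct[OF \<open>0 < m\<close> \<open>0 < m\<close>] \<open>0 < m\<close> by simp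
qed

definition two_color_matrix :: "nat \<Rightarrow> nat \<Rightarrow> nat \<Rightarrow> nat \<Rightarrow> nat" where
  "two_color_matrix n m i j = (if (i < n div 2) = (j < m div 2) then 1 else 2)"

lemma quasi_majority_two_color_matrix:
  "quasi_majority (complete_bipartite n m) (matrix_coloring (two_color_matrix n m))"
proof (rule quasi_majority_complete_bipartiteI)
  fix i
  have "(\<lambda>j. matrix_coloring (two_color_matrix n m) {Inl i, Inr j})
    = (\<lambda>j. if j < m div 2 then (if i < n div 2 then 1 else 2) else (if i < n div 2 then 2 else 1))"
    by (auto simp: two_color_matrix_def)
  then show "quasi_majority_seq m (\<lambda>j. matrix_coloring (two_color_matrix n m) {Inl i, Inr j})"
    by (simp add: quasi_majority_seq_halves)
next
  fix j
  have "(\<lambda>i. matrix_coloring (two_color_matrix n m) {Inl i, Inr j})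
    = (\<lambda>i. if i < n div 2 then (if j < m div 2 then 1 else 2) else (if j < m div 2 then 2 else 1))"
    by (auto simp: two_color_matrix_def)
  then show "quasi_majority_seq n (\<lambda>i. matrix_coloring (two_color_matrix n m) {Inl i, Inr j})"
    by (simp add: quasi_majority_seq_halves)
qed

(* With h = m div 2 the row sums are m + 2h, 3m - h, 2m - h and the column sums are
   2m + h - 1, 3m - 2h - 1; they only collide for m <= 2. *)

definition three_color_matrix :: "nat \<Rightarrow> nat \<Rightarrow> nat \<Rightarrow> nat" where
  "three_color_matrix m i j =
    (if j < m div 2 then (if i < m div 2 then 3 else if i < m - 1 then 2 else 1)
     else (if i < m div 2 then 1 else if i < m - 1 then 3 else 2))"

lemma quasi_majority_three_color_matrix:
  "quasi_majority (complete_bipartite m m) (matrix_coloring (three_color_matrix m))"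
proof (rule quasi_majority_complete_bipartiteI)
  fix i
  have "(\<lambda>j. matrix_coloring (three_color_matrix m) {Inl i, Inr j})
    = (\<lambda>j. if j < m div 2 then (if i < m div 2 then 3 else if i < m - 1 then 2 else 1)
      else (if i < m div 2 then 1 else if i < m - 1 then 3 else 2))"
    by (auto simp: three_color_matrix_def)
  then show "quasi_majority_seq m (\<lambda>j. matrix_coloring (three_color_matrix m) {Inl i, Inr j})"
    by (simp add: quasi_majority_seq_halves)
next
  fix j
  have "(\<lambda>i. matrix_coloring (three_color_matrix m) {Inl i, Inr j})
    = (if j < m div 2 then (\<lambda>i. if i < m div 2 then 3 else if i < m - 1 then 2 else 1)
      else (\<lambda>i. if i < m div 2 then 1 else if i < m - 1 then 3 else 2))"
    by (auto simp: three_color_matrix_def)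
  then show "quasi_majority_seq m (\<lambda>i. matrix_coloring (three_color_matrix m) {Inl i, Inr j})"
    by (simp add: quasi_majority_seq_three_blocks)
qed

lemma nsd_three_color_matrix:
  assumes "m \<ge> 3"
  shows "nsd (complete_bipartite m m) (matrix_coloring (three_color_matrix m))"
  unfolding nsd_complete_bipartite_iff
proof (intro allI impI)
  fix i j
  assume "i < m" "j < m"
  let ?c = "matrix_coloring (three_color_matrix m)"
  define h where "h = m div 2"
  have "h < m" "h \<le> m"
    using assms unfolding h_def by auto
  consider "three_color_matrix m i = (\<lambda>j. if j < h then 3 else 1)"
    | "three_color_matrix m i = (\<lambda>j. if j < h then 2 else 3)"
    | "three_color_matrix m i = (\<lambda>j. if j < h then 1 else 2)"
    unfolding three_color_matrix_def h_def by (cases "i < m div 2"; cases "i < m - 1") auto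
  then have row: "sigma (complete_bipartite m m) ?c (Inl i) \<in> {m + 2 * h, 3 * m - h, 2 * m - h}"
    by cases
      (use \<open>i < m\<close> \<open>h \<le> m\<close> in \<open>(simp add: sigma_complete_bipartite_Inl sum_halves; arith)+\<close>)
  have column: "sigma (complete_bipartite m m) ?c (Inr j) \<in> {2 * m + h - 1, 3 * m - 2 * h - 1}"
  proof (cases "j < h")
    case True
    then have "(\<Sum>i<m. three_color_matrix m i j)
      = (\<Sum>i<m. if i < h then 3 else if i < m - 1 then 2 else 1)"
      by (simp add: three_color_matrix_def h_def)
    then show ?thesis
      using \<open>j < m\<close> \<open>h < m\<close> by (simp add: sigma_complete_bipartite_Inr sum_three_blocks; arith)
  next
    case False
    then have "(\<Sum>i<m. three_color_matrix m i j)
      = (\<Sum>i<m. if i < h then 1 else if i < m - 1 then 3 else 2)"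
      by (simp add: three_color_matrix_def h_def)
    then show ?thesis
      using \<open>j < m\<close> \<open>h < m\<close> by (simp add: sigma_complete_bipartite_Inr sum_three_blocks; arith)
  qed
  have "m = 2 * h \<or> m = 2 * h + 1"
    unfolding h_def by auto
  then show "sigma (complete_bipartite m m) ?c (Inl i) \<noteq> sigma (complete_bipartite m m) ?c (Inr j)"
    using row column assms by auto
qed

theorem mainTheorem5:
  fixes n m :: nat
  assumes "n \<ge> 1" and "m \<ge> 1"
    and nice: "\<not> (n = 1 \<and> m = 1)"
    and "\<not> (n = 2 \<and> m = 2)"
  shows "chi_qm_sigma (complete_bipartite n m) = (if n \<noteq> m then 2 else 3)"
proof (cases "n = m")
  case False
  have "chi_qm_sigma (complete_bipartite n m) = 2"
  proof (rule chi_qm_sigma_eqI)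
    show colors: "k_edge_coloring (complete_bipartite n m) 2 (matrix_coloring (two_color_matrix n m))"
      by (rule k_edge_coloring_matrix_coloring) (simp add: two_color_matrix_def)
    show quasi_majority: "quasi_majority (complete_bipartite n m) (matrix_coloring (two_color_matrix n m))"
      by (rule quasi_majority_two_color_matrix)
    show "nsd (complete_bipartite n m) (matrix_coloring (two_color_matrix n m))"
      using False colors quasi_majority by (rule nsd_two_colors_complete_bipartite)
  qed (use not_quasi_majority_one_color[OF assms(1-3)] in simp)
  with False show ?thesis by simp
next
  case True
  with assms have "m \<ge> 3" by auto
  have "chi_qm_sigma (complete_bipartite m m) = 3"
  proof (rule chi_qm_sigma_eqI)
    show "k_edge_coloring (complete_bipartite m m) 3 (matrix_coloring (three_color_matrix m))"
      by (rule k_edge_coloring_matrix_coloring) (simp add: three_color_matrix_def)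
    show "quasi_majority (complete_bipartite m m) (matrix_coloring (three_color_matrix m))"
      by (rule quasi_majority_three_color_matrix)
    show "nsd (complete_bipartite m m) (matrix_coloring (three_color_matrix m))"
      using \<open>m \<ge> 3\<close> by (rule nsd_three_color_matrix)
  qed (use not_nsd_two_colors_complete_bipartite_square[OF assms(2)] in simp)
  with True show ?thesis by simp
qed

end
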